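(* Let $G=(V,E)$ be a graph and suppose there is a graphical instance $(f_v)_{v\in V}$ on $G$ for which $G$ has no EFX orientation, and an edge $e=uv\in E$ that has zero value for both of its endpoints $u$ and $v$. Let $G'$ be obtained from $G$ by replacing the edge $e$ with a path of any odd length from $u$ to $v$ whose internal vertices are new. Then $G'$ is not strongly EFX-orientable.
   Context: All graphs are finite and simple. For a graph $G=(V,E)$ and $v\in V$, $E(v)$ is the set of edges incident to $v$. A graphical instance on $G$ assigns to each vertex $v$ a valuation $f_v:2^E\to\mathbb{R}_{\ge 0}$ that is monotone ($A\subseteq B\Rightarrow f_v(A)\le f_v(B)$) and satisfies $f_v(X)=f_v(X\cap E(v))$ for all $X\subseteq E$. An item (edge) $m$ has zero value to agent (vertex) $i$ if $f_i(X\setminus\{m\})=f_i(X)$ for all $X\subseteq E$. An orientation of $G$ chooses for each edge one of its endpoints as its head; vertex $v$ receives the bundle $X_v$ of edges whose head is $v$. The orientation is EFX if for all $u,v\in V$ and every $g\in X_v$, $f_u(X_u)\ge f_u(X_v\setminus\{g\})$. A graph $G$ is strongly EFX-orientable if for every graphical instance on $G$ there exists an EFX orientation. *)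

theory Defs
  imports Complex_Main
begin

definition simple_graph :: "'v set \<Rightarrow> 'v set set \<Rightarrow> bool" where
  "simple_graph V E \<longleftrightarrow> finite V \<and>
     (\<forall>e\<in>E. \<exists>x y. e = {x, y} \<and> x \<noteq> y \<and> x \<in> V \<and> y \<in> V)"

definition incident :: "'v set set \<Rightarrow> 'v \<Rightarrow> 'v set set" where
  "incident E v = {e \<in> E. v \<in> e}"

definition graphical_instance :: "'v set \<Rightarrow> 'v set set \<Rightarrow> ('v \<Rightarrow> 'v set set \<Rightarrow> real) \<Rightarrow> bool" where
  "graphical_instance V E f \<longleftrightarrow>
     (\<forall>v\<in>V. (\<forall>X. X \<subseteq> E \<longrightarrow> f v X \<ge> 0)
          \<and> (\<forall>A B. A \<subseteq> B \<longrightarrow> B \<subseteq> E \<longrightarrow> f v A \<le> f v B)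
          \<and> (\<forall>X. X \<subseteq> E \<longrightarrow> f v X = f v (X \<inter> incident E v)))"

definition zero_value :: "'v set set \<Rightarrow> ('v \<Rightarrow> 'v set set \<Rightarrow> real) \<Rightarrow> 'v \<Rightarrow> 'v set \<Rightarrow> bool" where
  "zero_value E f i m \<longleftrightarrow> (\<forall>X. X \<subseteq> E \<longrightarrow> f i (X - {m}) = f i X)"

definition orientation :: "'v set set \<Rightarrow> ('v set \<Rightarrow> 'v) \<Rightarrow> bool" where
  "orientation E h \<longleftrightarrow> (\<forall>e\<in>E. h e \<in> e)"

definition bundle_of :: "'v set set \<Rightarrow> ('v set \<Rightarrow> 'v) \<Rightarrow> 'v \<Rightarrow> 'v set set" where
  "bundle_of E h v = {e \<in> E. h e = v}"

definition EFX_orientation :: "'v set \<Rightarrow> 'v set set \<Rightarrow> ('v \<Rightarrow> 'v set set \<Rightarrow> real) \<Rightarrow> ('v set \<Rightarrow> 'v) \<Rightarrow> bool" where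
  "EFX_orientation V E f h \<longleftrightarrow> orientation E h \<and>
     (\<forall>u\<in>V. \<forall>v\<in>V. \<forall>g\<in>bundle_of E h v.
        f u (bundle_of E h u) \<ge> f u (bundle_of E h v - {g}))"

definition strongly_EFX_orientable :: "'v set \<Rightarrow> 'v set set \<Rightarrow> bool" where
  "strongly_EFX_orientable V E \<longleftrightarrow>
     (\<forall>f. graphical_instance V E f \<longrightarrow> (\<exists>h. EFX_orientation V E f h))"

definition path_edges :: "'v list \<Rightarrow> 'v set set" where
  "path_edges p = {{p ! i, p ! Suc i} | i. Suc i < length p}"

end

theory Submission
  imports Defs
begin

text \<open>Write the path as \<open>u = p0, p1, ..., p(n-1) = v\<close> with \<open>n\<close> even. Match the internal
  vertices in pairs \<open>p1 p2, p3 p4, ...\<close>, let each of them value only its matching edge, and let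
  the old vertices keep their valuations. In an EFX orientation a matching edge cannot go to a
  vertex that already holds another edge, so once the first path edge points away from \<open>u\<close>,
  the orientation is forced along the whole path and the last edge points to \<open>v\<close>. Hence some
  endpoint of \<open>uv\<close> holds a path edge; giving it \<open>uv\<close> instead, which is worthless to everybody,
  yields an EFX orientation of the original instance, which does not exist.\<close>

lemma simple_graph_edge_subset:
  assumes "simple_graph V E" "e \<in> E"
  shows "e \<subseteq> V"
  using assms unfolding simple_graph_def by fastforce

lemma graphical_instanceD:
  assumes "graphical_instance V E f" "v \<in> V"
  shows graphical_instance_nonneg: "X \<subseteq> E \<Longrightarrow> 0 \<le> f v X"
    and graphical_instance_mono: "A \<subseteq> B \<Longrightarrow> B \<subseteq> E \<Longrightarrow> f v A \<le> f v B"
    and graphical_instance_local: "X \<subseteq> E \<Longrightarrow> f v X = f v (X \<inter> incident E v)"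
  using assms unfolding graphical_instance_def by blast+

lemma EFX_orientationD:
  assumes "EFX_orientation V E f h"
  shows EFX_orientation_head: "e \<in> E \<Longrightarrow> h e \<in> e"
    and EFX_orientation_envy: "u \<in> V \<Longrightarrow> v \<in> V \<Longrightarrow> g \<in> bundle_of E h v \<Longrightarrow>
      f u (bundle_of E h v - {g}) \<le> f u (bundle_of E h u)"
  using assms unfolding EFX_orientation_def orientation_def by simp_all

lemma zero_value_if_zero_for_endpoints:
  assumes inst: "graphical_instance V E f" and "a \<in> V"
    and endpoints: "\<And>x. x \<in> e \<Longrightarrow> zero_value E f x e"
  shows "zero_value E f a e"
proof (cases "a \<in> e")
  case False
  show ?thesis
    unfolding zero_value_def
  proof (intro allI impI)
    fix X assume "X \<subseteq> E"
    have "(X - {e}) \<inter> incident E a = X \<inter> incident E a"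
      using False unfolding incident_def by auto
    then show "f a (X - {e}) = f a X"
      using graphical_instance_local[OF inst \<open>a \<in> V\<close>, of X]
        graphical_instance_local[OF inst \<open>a \<in> V\<close>, of "X - {e}"] \<open>X \<subseteq> E\<close>
      by auto
  qed
qed (use endpoints in blast)

text \<open>The contraction of a subdivided edge \<open>e0\<close> back into \<open>G\<close>: \<open>e0\<close> goes to an endpoint \<open>w\<close>
  that holds a new edge \<open>e'\<close>; removing \<open>e'\<close> from \<open>w\<close>'s bundle in \<open>G'\<close> then looks to every old
  vertex exactly like removing \<open>e0\<close> from \<open>w\<close>'s bundle in \<open>G\<close>.\<close>

lemma EFX_orientation_contract_edge:
  assumes efx': "EFX_orientation V' E' f' h'"
    and "V \<subseteq> V'"
    and E'E: "E' \<inter> E = E - {e0}"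
    and f'f: "\<And>a X. a \<in> V \<Longrightarrow> f' a X = f a (X \<inter> E)"
    and zero: "\<And>a. a \<in> V \<Longrightarrow> zero_value E f a e0"
    and e': "e' \<in> E' - E" "h' e' = w" "w \<in> e0"
  shows "EFX_orientation V E f (h'(e0 := w))"
proof -
  define h where "h = h'(e0 := w)"
  have restrict: "bundle_of E' h' b \<inter> E = bundle_of E h b - {e0}" for b
    using E'E unfolding bundle_of_def h_def by auto
  have drop_e0: "f a (X - {e0}) = f a X" if "a \<in> V" "X \<subseteq> E" for a X
    using zero[OF that(1)] that(2) unfolding zero_value_def by simp
  have own: "f' a (bundle_of E' h' a) = f a (bundle_of E h a)" if "a \<in> V" for a
  proof -
    have "f' a (bundle_of E' h' a) = f a (bundle_of E h a - {e0})"
      unfolding f'f[OF that] restrict ..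
    also have "\<dots> = f a (bundle_of E h a)"
      by (rule drop_e0[OF that]) (simp add: bundle_of_def)
    finally show ?thesis .
  qed
  have "EFX_orientation V E f h"
    unfolding EFX_orientation_def orientation_def
  proof (intro conjI ballI)
    fix e assume "e \<in> E"
    show "h e \<in> e"
    proof (cases "e = e0")
      case False
      with \<open>e \<in> E\<close> E'E have "e \<in> E'" by blast
      then show ?thesis
        using EFX_orientation_head[OF efx'] False by (simp add: h_def)
    qed (simp add: h_def e'(3))
  next
    fix a b g assume a: "a \<in> V" and b: "b \<in> V" and g: "g \<in> bundle_of E h b"
    obtain g' where g': "g' \<in> bundle_of E' h' b"
      and same: "(bundle_of E' h' b - {g'}) \<inter> E = bundle_of E h b - {g} - {e0}"
    proof (cases "g = e0")
      case True
      then have "b = w" using g unfolding bundle_of_def h_def by simp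
      then have "e' \<in> bundle_of E' h' b" using e' unfolding bundle_of_def by blast
      moreover have "(bundle_of E' h' b - {e'}) \<inter> E = bundle_of E h b - {g} - {e0}"
        using restrict[of b] e'(1) True by blast
      ultimately show ?thesis by (rule that)
    next
      case False
      then have "g \<in> bundle_of E' h' b" using g E'E unfolding bundle_of_def h_def by auto
      moreover have "(bundle_of E' h' b - {g}) \<inter> E = bundle_of E h b - {g} - {e0}"
        using restrict[of b] by blast
      ultimately show ?thesis by (rule that)
    qed
    have "f a (bundle_of E h b - {g}) = f a (bundle_of E h b - {g} - {e0})"
      by (rule drop_e0[OF a, symmetric]) (auto simp: bundle_of_def)
    also have "\<dots> = f' a (bundle_of E' h' b - {g'})"
      unfolding f'f[OF a] same ..
    also have "\<dots> \<le> f' a (bundle_of E' h' a)"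
      using EFX_orientation_envy[OF efx'] a b g' \<open>V \<subseteq> V'\<close> by blast
    also have "\<dots> = f a (bundle_of E h a)"
      using own a .
    finally show "f a (bundle_of E h b - {g}) \<le> f a (bundle_of E h a)" .
  qed
  then show ?thesis unfolding h_def .
qed

definition subdivision_valuation ::
    "'v set \<Rightarrow> 'v set set \<Rightarrow> ('v \<Rightarrow> 'v set set \<Rightarrow> real) \<Rightarrow> 'v set set \<Rightarrow> 'v \<Rightarrow> 'v set set \<Rightarrow> real"
  where "subdivision_valuation V E f M w X =
    (if w \<in> V then f w (X \<inter> E) else of_bool (\<exists>e\<in>X \<inter> M. w \<in> e))"

lemma graphical_instance_subdivision_valuation:
  fixes f :: "'v \<Rightarrow> 'v set set \<Rightarrow> real"
  assumes inst: "graphical_instance V E f"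
  shows "graphical_instance V' E' (subdivision_valuation V E f M)"
  unfolding graphical_instance_def
proof (intro ballI conjI allI impI)
  fix w X
  show "0 \<le> subdivision_valuation V E f M w X"
    using graphical_instance_nonneg[OF inst] by (simp add: subdivision_valuation_def)
next
  fix w and A B :: "'v set set" assume "A \<subseteq> B"
  show "subdivision_valuation V E f M w A \<le> subdivision_valuation V E f M w B"
  proof (cases "w \<in> V")
    case True
    have "f w (A \<inter> E) \<le> f w (B \<inter> E)"
      by (rule graphical_instance_mono[OF inst True]) (use \<open>A \<subseteq> B\<close> in auto)
    with True show ?thesis by (simp add: subdivision_valuation_def)
  qed (use \<open>A \<subseteq> B\<close> in \<open>auto simp: subdivision_valuation_def\<close>)
next
  fix w X assume X: "X \<subseteq> E'"
  show "subdivision_valuation V E f M w X = subdivision_valuation V E f M w (X \<inter> incident E' w)"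
  proof (cases "w \<in> V")
    case True
    have "f w (X \<inter> E) = f w (X \<inter> E \<inter> incident E w)"
      by (rule graphical_instance_local[OF inst True]) simp
    also have "X \<inter> E \<inter> incident E w = X \<inter> incident E' w \<inter> E"
      using X unfolding incident_def by blast
    finally show ?thesis using True by (simp add: subdivision_valuation_def)
  next
    case False
    have "(\<exists>e\<in>X \<inter> M. w \<in> e) \<longleftrightarrow> (\<exists>e\<in>X \<inter> incident E' w \<inter> M. w \<in> e)"
      using X unfolding incident_def by blast
    then show ?thesis using False by (simp add: subdivision_valuation_def)
  qed
qed

lemma EFX_head_of_valued_edge:
  assumes efx: "EFX_orientation V E f h"
    and "a \<in> V" "b \<in> V" "a \<noteq> b" "{a, b} \<in> E"
    and val: "\<And>X. f b X = of_bool ({a, b} \<in> X)"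
    and e: "e \<in> E" "e \<noteq> {a, b}" "h e = a"
  shows "h {a, b} = b"
proof (rule ccontr)
  assume "h {a, b} \<noteq> b"
  then have "h {a, b} = a"
    using EFX_orientation_head[OF efx \<open>{a, b} \<in> E\<close>] by blast
  then have "f b (bundle_of E h a - {e}) = 1" and "f b (bundle_of E h b) = 0"
    using val \<open>{a, b} \<in> E\<close> e(2) \<open>a \<noteq> b\<close> by (auto simp: bundle_of_def)
  moreover have "f b (bundle_of E h a - {e}) \<le> f b (bundle_of E h b)"
    using EFX_orientation_envy[OF efx \<open>b \<in> V\<close> \<open>a \<in> V\<close>] e by (simp add: bundle_of_def)
  ultimately show False by simp
qed

lemma EFX_head_forced_across_valued_edge:
  assumes efx: "EFX_orientation V E f h"
    and dist: "distinct [x0, x1, x2, x3]" and "x1 \<in> V" "x2 \<in> V"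
    and edges: "{x0, x1} \<in> E" "{x1, x2} \<in> E" "{x2, x3} \<in> E"
    and val1: "\<And>X. f x1 X = of_bool ({x1, x2} \<in> X)"
    and val2: "\<And>X. f x2 X = of_bool ({x1, x2} \<in> X)"
    and "h {x0, x1} = x1"
  shows "h {x2, x3} = x3"
proof -
  have "h {x1, x2} = x2"
    by (rule EFX_head_of_valued_edge[OF efx \<open>x1 \<in> V\<close> \<open>x2 \<in> V\<close> _ edges(2) val2 edges(1)])
      (use dist \<open>h {x0, x1} = x1\<close> in \<open>auto simp: doubleton_eq_iff\<close>)
  moreover have "h {x2, x3} \<noteq> x2"
  proof
    assume "h {x2, x3} = x2"
    have swap: "{x2, x1} = {x1, x2}" by (rule insert_commute)
    have "h {x2, x1} = x1"
      by (rule EFX_head_of_valued_edge[OF efx \<open>x2 \<in> V\<close> \<open>x1 \<in> V\<close> _ _ _ edges(3) _ \<open>h {x2, x3} = x2\<close>])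
        (use dist edges(2) val1 in \<open>auto simp: swap doubleton_eq_iff\<close>)
    with \<open>h {x1, x2} = x2\<close> dist show False by (simp add: swap)
  qed
  moreover have "h {x2, x3} \<in> {x2, x3}"
    by (rule EFX_orientation_head[OF efx edges(3)])
  ultimately show ?thesis by blast
qed

lemma path_edges_pair: "path_edges [u, v] = {{u, v}}"
  unfolding path_edges_def by auto

lemma path_edges_nth: "Suc i < length p \<Longrightarrow> {p ! i, p ! Suc i} \<in> path_edges p"
  unfolding path_edges_def by blast

lemma distinct_nth_inner:
  assumes "distinct p" "0 < k" "k < length p - 1"
  shows "p ! k \<in> set p - {hd p, last p}"
proof -
  have "p \<noteq> []" and "k < length p" using assms(3) by auto
  then show ?thesis
    using assms by (auto simp: hd_conv_nth last_conv_nth nth_eq_iff_index_eq)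
qed

lemma path_edges_disjoint:
  assumes edges: "\<And>e. e \<in> E \<Longrightarrow> e \<subseteq> V" and dist: "distinct p" and "3 \<le> length p"
    and new: "\<forall>w\<in>set p - {hd p, last p}. w \<notin> V"
  shows "path_edges p \<inter> E = {}"
proof -
  have "{p ! i, p ! Suc i} \<notin> E" if i: "Suc i < length p" for i
  proof -
    obtain k where k: "k \<in> {i, Suc i}" "0 < k" "k < length p - 1"
    proof (cases "i = 0")
      case True
      with \<open>3 \<le> length p\<close> show ?thesis by (intro that[of 1]) auto
    next
      case False
      with i show ?thesis by (intro that[of i]) auto
    qed
    then have "p ! k \<notin> V"
      using new distinct_nth_inner[OF dist] by blast
    moreover have "p ! k \<in> {p ! i, p ! Suc i}"
      using k(1) by blast
    ultimately show ?thesis using edges by blast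
  qed
  then show ?thesis unfolding path_edges_def by blast
qed

lemma EFX_path_edge_oriented_to_end:
  fixes p :: "'v list"
  assumes efx: "EFX_orientation V E f h" and dist: "distinct p"
    and even: "even (length p)" and "p \<noteq> []"
    and "set p \<subseteq> V" and "path_edges p \<subseteq> E"
    and val: "\<And>i w X. odd i \<Longrightarrow> Suc i < length p \<Longrightarrow> w \<in> {p ! i, p ! Suc i} \<Longrightarrow>
      f w X = of_bool ({p ! i, p ! Suc i} \<in> X)"
  shows "\<exists>e\<in>path_edges p. h e \<in> {hd p, last p}"
proof -
  obtain m where m: "length p = 2 * m" using even by blast
  define k where "k = m - 1"
  have k: "length p = 2 * k + 2"
    using m \<open>p \<noteq> []\<close> unfolding k_def by (cases m) auto
  have edge: "{p ! i, p ! Suc i} \<in> E" if "Suc i < length p" for i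
    using path_edges_nth[OF that] \<open>path_edges p \<subseteq> E\<close> by blast
  have vertex: "p ! i \<in> V" if "i < length p" for i
    using that \<open>set p \<subseteq> V\<close> by auto
  show ?thesis
  proof (cases "h {p ! 0, p ! 1} = p ! 0")
    case True
    then show ?thesis
      using path_edges_nth[of 0 p] k \<open>p \<noteq> []\<close> by (auto simp: hd_conv_nth)
  next
    case away: False
    have "h {p ! (2 * j), p ! (2 * j + 1)} = p ! (2 * j + 1)" if "j \<le> k" for j
      using that
    proof (induction j)
      case 0
      have "h {p ! 0, p ! 1} \<in> {p ! 0, p ! 1}"
        using EFX_orientation_head[OF efx edge[of 0]] k by simp
      with away show ?case by auto
    next
      case (Suc j)
      have i: "2 * j + 3 < length p" using Suc.prems k by simp
      have "h {p ! (2 * j + 2), p ! (2 * j + 3)} = p ! (2 * j + 3)"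
      proof (rule EFX_head_forced_across_valued_edge[OF efx])
        show "distinct [p ! (2 * j), p ! (2 * j + 1), p ! (2 * j + 2), p ! (2 * j + 3)]"
          using dist i by (simp add: nth_eq_iff_index_eq)
        show "h {p ! (2 * j), p ! (2 * j + 1)} = p ! (2 * j + 1)"
          using Suc by simp
        have "odd (2 * j + 1)" "Suc (2 * j + 1) < length p" using i by simp_all
        from val[OF this] show
          "\<And>X. f (p ! (2 * j + 1)) X = of_bool ({p ! (2 * j + 1), p ! (2 * j + 2)} \<in> X)"
          "\<And>X. f (p ! (2 * j + 2)) X = of_bool ({p ! (2 * j + 1), p ! (2 * j + 2)} \<in> X)"
          by (simp_all add: numeral_2_eq_2)
      qed (use i edge[of "2 * j"] edge[of "2 * j + 1"] edge[of "2 * j + 2"] vertex in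
          \<open>simp_all add: numeral_2_eq_2 numeral_3_eq_3\<close>)
      then show ?case by (simp add: numeral_2_eq_2 numeral_3_eq_3)
    qed
    then have "h {p ! (2 * k), p ! Suc (2 * k)} = last p"
      using k \<open>p \<noteq> []\<close> by (simp add: last_conv_nth)
    then show ?thesis
      using path_edges_nth[of "2 * k" p] k by auto
  qed
qed

text \<open>For a path with an even number of vertices, the second, fourth, ... edges form a perfect
  matching of its internal vertices.\<close>

definition path_odd_edges :: "'v list \<Rightarrow> 'v set set" where
  "path_odd_edges p = {{p ! i, p ! Suc i} | i. odd i \<and> Suc i < length p}"

lemma path_odd_edges_containing:
  assumes dist: "distinct p" and i: "odd i" "Suc i < length p" and w: "w \<in> {p ! i, p ! Suc i}"
  shows "{e \<in> path_odd_edges p. w \<in> e} = {{p ! i, p ! Suc i}}"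
proof -
  have "j = i" if j: "odd j" "Suc j < length p" "w \<in> {p ! j, p ! Suc j}" for j
  proof -
    have "j = i \<or> j = Suc i \<or> Suc j = i"
      using w j i dist by (auto simp: nth_eq_iff_index_eq)
    with i j show ?thesis by presburger
  qed
  then show ?thesis
    using i w unfolding path_odd_edges_def by blast
qed

lemma subdivision_valuation_path_vertex:
  assumes dist: "distinct p" and even: "even (length p)"
    and new: "\<forall>w\<in>set p - {hd p, last p}. w \<notin> V"
    and i: "odd i" "Suc i < length p" and w: "w \<in> {p ! i, p ! Suc i}"
  shows "subdivision_valuation V E f (path_odd_edges p) w X = of_bool ({p ! i, p ! Suc i} \<in> X)"
proof -
  have "0 < i" "Suc i < length p - 1" using i even by presburger+
  then have "p ! i \<in> set p - {hd p, last p}" "p ! Suc i \<in> set p - {hd p, last p}"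
    using distinct_nth_inner[OF dist] by simp_all
  then have "w \<notin> V"
    using new w by blast
  have "(\<exists>e\<in>X \<inter> path_odd_edges p. w \<in> e) \<longleftrightarrow> (\<exists>e\<in>X. e \<in> {e \<in> path_odd_edges p. w \<in> e})"
    by blast
  also have "\<dots> \<longleftrightarrow> {p ! i, p ! Suc i} \<in> X"
    unfolding path_odd_edges_containing[OF dist i w] by simp
  finally show ?thesis
    using \<open>w \<notin> V\<close> by (simp add: subdivision_valuation_def)
qed

theorem mainTheorem12:
  fixes V :: "'v set" and E :: "'v set set" and f :: "'v \<Rightarrow> 'v set set \<Rightarrow> real"
    and u v :: 'v and p :: "'v list"
  assumes G: "simple_graph V E"
    and inst: "graphical_instance V E f"
    and noEFX: "\<not> (\<exists>h. EFX_orientation V E f h)"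
    and e: "{u, v} \<in> E"
    and zu: "zero_value E f u {u, v}"
    and zv: "zero_value E f v {u, v}"
    and p_dist: "distinct p"
    and p_ne: "p \<noteq> []"
    and p_hd: "hd p = u"
    and p_last: "last p = v"
    and p_odd: "odd (length p - 1)"
    and p_new: "\<forall>w\<in>set p - {u, v}. w \<notin> V"
  shows "\<not> strongly_EFX_orientable (V \<union> set p) ((E - {{u, v}}) \<union> path_edges p)"
proof
  assume SE: "strongly_EFX_orientable (V \<union> set p) ((E - {{u, v}}) \<union> path_edges p)"
  have uv_V: "{u, v} \<subseteq> V" using simple_graph_edge_subset[OF G e] .
  have even: "even (length p)" and "2 \<le> length p"
    using p_odd p_ne by (cases p; simp; presburger)+
  show False
  proof (cases "length p = 2")
    case True
    then have "p = [u, v]"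
      using p_hd p_last by (auto simp: length_Suc_conv numeral_2_eq_2)
    then have "strongly_EFX_orientable V E"
      using SE e uv_V by (simp add: path_edges_pair insert_absorb Un_absorb2)
    then show False
      using inst noEFX unfolding strongly_EFX_orientable_def by blast
  next
    case False
    obtain h' where efx: "EFX_orientation (V \<union> set p) ((E - {{u, v}}) \<union> path_edges p)
        (subdivision_valuation V E f (path_odd_edges p)) h'"
      using SE graphical_instance_subdivision_valuation[OF inst]
      unfolding strongly_EFX_orientable_def by blast
    have new: "\<forall>w\<in>set p - {hd p, last p}. w \<notin> V"
      using p_new p_hd p_last by simp
    obtain e' w where e': "e' \<in> path_edges p" "h' e' = w" "w \<in> {u, v}"
      using EFX_path_edge_oriented_to_end[OF efx p_dist even p_ne _ _
          subdivision_valuation_path_vertex[OF p_dist even new]] p_hd p_last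
      by auto
    have "path_edges p \<inter> E = {}"
      using path_edges_disjoint[OF simple_graph_edge_subset[OF G] p_dist _ new]
        \<open>2 \<le> length p\<close> False by simp
    moreover have "zero_value E f a {u, v}" if "a \<in> V" for a
      using zero_value_if_zero_for_endpoints[OF inst that] zu zv by blast
    ultimately have "EFX_orientation V E f (h'({u, v} := w))"
      using e' by (intro EFX_orientation_contract_edge[OF efx]) (auto simp: subdivision_valuation_def)
    then show False using noEFX by blast
  qed
qed

end
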